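(* Let $w>1$ and assume $\alpha_2-\alpha_1\ge\frac{16}{\sqrt{\ln w}}$. Let $s_0\in[\frac34,1)$ and suppose the solution of the guided probability flow ODE satisfies $\tilde x(s)\ge\frac{\alpha_1+\alpha_2}{2}$ for all $s\in[s_0,1]$. Define $$s_1=\max\Bigl(1-\frac{16(1-s_0)^5}{\bigl(1-2(1-s_0)\bigr)^4\bigl(\tilde x(s_0)-\alpha_2\bigr)^4},\ s_0\Bigr)$$ (with $s_1=s_0$ if $\tilde x(s_0)=\alpha_2$). Then for every $s\in[s_1,1]$, $$\tilde x(s)\le\alpha_2\Bigl(1+4(1-s_0)\Bigl(1+\frac{\alpha_2w}{\alpha_1^2}\Bigr)\Bigr).$$
   Context: Let $0<\alpha_1<\alpha_2$ and $\beta\ge1$. Let $p^{(1)}$ and $p^{(-1)}$ be probability densities on $\mathbb R$ supported on $[\alpha_1,\alpha_2]$ and $[-\alpha_2,-\alpha_1]$ respectively, which are $\beta$-bounded with respect to each other: $\frac1\beta\le \frac{p^{(-1)}(x_1)}{p^{(1)}(x_2)}\le\beta$ for all $x_1\in(-\alpha_2,-\alpha_1)$, $x_2\in(\alpha_1,\alpha_2)$. Let $p=\frac12p^{(1)}+\frac12p^{(-1)}$, and let $(X_0,z)$ be jointly distributed with $z$ uniform on $\{\pm1\}$ and $X_0\mid z\sim p^{(z)}$. Fix $T>0$; for $t\in[0,T]$ put $a_t=e^{t-T}$, $b_t=\sqrt{1-a_t^2}$, and $X_t=a_tX_0+\xi_t$ with $\xi_t\sim\mathcal N(0,b_t^2)$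 independent of $(X_0,z)$. Let $p_t$ denote the density of $X_t$ and $p_t(\cdot\mid z=\pm1)$ the conditional density of $X_t$ given $z=\pm1$. For a guidance parameter $w\ge0$, the guided probability flow ODE is $x'(t)=x(t)+(w+1)\nabla\log p_t(x(t)\mid z=1)-w\nabla\log p_t(x(t))$, $t\in[0,T)$, and $\tilde x(1)=\lim_{t\to T}x(t)$. Time is reparametrized by $s=a_t=e^{t-T}\in[e^{-T},1]$, $\tilde x(s)=x(T+\ln s)$. *)

theory Defs
  imports "HOL-Probability.Probability"
begin

definition sched_a :: "real \<Rightarrow> real \<Rightarrow> real" where
  "sched_a T t = exp (t - T)"

definition sched_b :: "real \<Rightarrow> real \<Rightarrow> real" where
  "sched_b T t = sqrt (1 - (sched_a T t)\<^sup>2)"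

definition is_pdf :: "(real \<Rightarrow> real) \<Rightarrow> bool" where
  "is_pdf p \<longleftrightarrow> (\<forall>x. 0 \<le> p x) \<and> p \<in> borel_measurable borel \<and>
     integrable lborel p \<and> (LINT x|lborel. p x) = 1"

text \<open>Density of X_t = a_t X_0 + xi_t with X_0 ~ q and xi_t ~ N(0, b_t^2) independent.\<close>
definition noised_density :: "real \<Rightarrow> (real \<Rightarrow> real) \<Rightarrow> real \<Rightarrow> real \<Rightarrow> real" where
  "noised_density T q t x = (LINT y|lborel. q y * normal_density (sched_a T t * y) (sched_b T t) x)"

definition mix_density :: "real \<Rightarrow> (real \<Rightarrow> real) \<Rightarrow> (real \<Rightarrow> real) \<Rightarrow> real \<Rightarrow> real \<Rightarrow> real" where
  "mix_density T p1 pm1 t x = 1/2 * noised_density T p1 t x + 1/2 * noised_density T pm1 t x"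

definition score :: "(real \<Rightarrow> real) \<Rightarrow> real \<Rightarrow> real" where
  "score f x = deriv (\<lambda>y. ln (f y)) x"

definition guided_field :: "real \<Rightarrow> (real \<Rightarrow> real) \<Rightarrow> (real \<Rightarrow> real) \<Rightarrow> real \<Rightarrow> real \<Rightarrow> real \<Rightarrow> real" where
  "guided_field T p1 pm1 w t x =
     x + (w + 1) * score (noised_density T p1 t) x - w * score (mix_density T p1 pm1 t) x"

end

theory Submission
  imports Defs
begin

text \<open>In the time \<open>s = a\<^sub>t\<close>, with \<open>X s = x (T + ln s)\<close>, the guided drift is controlled by the
  supports: the score of the noised \<open>p(1)\<close> is at most \<open>(s \<alpha>2 - X) / (1 - s\<^sup>2)\<close>, that of the noised
  \<open>p(-1)\<close> is at least \<open>- (s \<alpha>2 + X) / (1 - s\<^sup>2)\<close>, and the relative weight of \<open>p(-1)\<close> in the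
  mixture is at most \<open>exp (- 2 s \<alpha>1 X / (1 - s\<^sup>2))\<close>. Above the barrier
  \<open>V = \<alpha>2 (1 + 4 (1 - s0) (1 + \<alpha>2 w / \<alpha>1\<^sup>2))\<close> the exponential term is negligible and
  \<open>X' (1 - s\<^sup>2) \<le> s (V - X) - c\<close> with \<open>c = 2 (1 - s0) \<alpha>2\<close>. Hence \<open>X\<close> never crosses \<open>V\<close> upwards,
  and while \<open>X \<ge> V\<close> the quantity \<open>(X - V + c s) / sqrt (1 - s\<^sup>2)\<close> does not increase. The time
  \<open>s1\<close> is chosen so that this quantity, started at \<open>s0\<close>, is at most \<open>c s1 / sqrt (1 - s1\<^sup>2)\<close> at
  \<open>s1\<close>; this forces \<open>X s1 \<le> V\<close>.\<close>

section \<open>Weighted integrals and differentiation under the integral\<close>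

lemma integrable_mult_bounded:
  fixes q h :: "'a \<Rightarrow> real"
  assumes "integrable M q" and "h \<in> borel_measurable M" and "\<And>y. \<bar>h y\<bar> \<le> C"
  shows "integrable M (\<lambda>y. q y * h y)"
proof (rule Bochner_Integration.integrable_bound)
  show "integrable M (\<lambda>y. \<bar>q y\<bar> * C)"
    using assms(1) by (intro integrable_mult_left integrable_abs)
  show "AE y in M. norm (q y * h y) \<le> norm (\<bar>q y\<bar> * C)"
    by (intro AE_I2) (simp add: abs_mult mult_left_mono[OF order_trans[OF assms(3) abs_ge_self]])
qed (use assms in auto)

lemma integral_weighted_le:
  fixes \<rho> h :: "'a \<Rightarrow> real"
  assumes "integrable M \<rho>" and "integrable M (\<lambda>y. \<rho> y * h y)"
    and "\<And>y. 0 \<le> \<rho> y" and "\<And>y. \<rho> y \<noteq> 0 \<Longrightarrow> h y \<le> c"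
  shows "(\<integral>y. \<rho> y * h y \<partial>M) \<le> c * (\<integral>y. \<rho> y \<partial>M)"
proof -
  have "\<rho> y * h y \<le> c * \<rho> y" for y
    using assms(3,4)[of y] by (cases "\<rho> y = 0") (auto simp: mult.commute intro: mult_left_mono)
  then have "(\<integral>y. \<rho> y * h y \<partial>M) \<le> (\<integral>y. c * \<rho> y \<partial>M)"
    using assms(1,2) by (intro integral_mono) auto
  then show ?thesis by simp
qed

lemma integral_weighted_ge:
  fixes \<rho> h :: "'a \<Rightarrow> real"
  assumes "integrable M \<rho>" and "integrable M (\<lambda>y. \<rho> y * h y)"
    and "\<And>y. 0 \<le> \<rho> y" and "\<And>y. \<rho> y \<noteq> 0 \<Longrightarrow> c \<le> h y"
  shows "c * (\<integral>y. \<rho> y \<partial>M) \<le> (\<integral>y. \<rho> y * h y \<partial>M)"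
proof -
  have "c * \<rho> y \<le> \<rho> y * h y" for y
    using assms(3,4)[of y] by (cases "\<rho> y = 0") (auto simp: mult.commute intro: mult_left_mono)
  then have "(\<integral>y. c * \<rho> y \<partial>M) \<le> (\<integral>y. \<rho> y * h y \<partial>M)"
    using assms(1,2) by (intro integral_mono) auto
  then show ?thesis by simp
qed

lemma has_real_derivative_integral_dominated:
  fixes f :: "'a \<Rightarrow> real \<Rightarrow> real"
  assumes f_int: "\<And>u. integrable M (\<lambda>y. f y u)"
    and f'_meas: "f' \<in> borel_measurable M"
    and deriv: "\<And>y. (f y has_real_derivative f' y) (at x)"
    and lipschitz: "\<And>y u. \<bar>f y u - f y x\<bar> \<le> g y * \<bar>u - x\<bar>"
    and g_int: "integrable M g"
  shows "((\<lambda>u. \<integral>y. f y u \<partial>M) has_real_derivative (\<integral>y. f' y \<partial>M)) (at x)"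
  unfolding has_field_derivative_iff tendsto_at_iff_sequentially
proof (intro allI impI)
  fix X :: "nat \<Rightarrow> real"
  assume X: "\<forall>i. X i \<in> UNIV - {x}" "X \<longlonglongrightarrow> x"
  define Q where "Q i y = (f y (X i) - f y x) / (X i - x)" for i y
  have quotient: "((\<lambda>u. ((\<integral>y. f y u \<partial>M) - (\<integral>y. f y x \<partial>M)) / (u - x)) \<circ> X) i = (\<integral>y. Q i y \<partial>M)" for i
    unfolding Q_def by (simp add: Bochner_Integration.integral_diff[OF f_int f_int])
  have "(\<lambda>i. \<integral>y. Q i y \<partial>M) \<longlonglongrightarrow> (\<integral>y. f' y \<partial>M)"
  proof (rule integral_dominated_convergence[where w=g])
    show "Q i \<in> borel_measurable M" for i
      unfolding Q_def using f_int by (intro borel_measurable_divide borel_measurable_diff) auto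
    show "AE y in M. (\<lambda>i. Q i y) \<longlonglongrightarrow> f' y"
    proof (intro AE_I2)
      fix y
      have "((\<lambda>u. (f y u - f y x) / (u - x)) \<longlongrightarrow> f' y) (at x)"
        using deriv[of y] by (simp add: has_field_derivative_iff)
      then show "(\<lambda>i. Q i y) \<longlonglongrightarrow> f' y"
        unfolding Q_def tendsto_at_iff_sequentially using X by (simp add: comp_def)
    qed
    show "AE y in M. norm (Q i y) \<le> g y" for i
      using lipschitz X(1) by (intro AE_I2) (simp add: Q_def divide_le_eq)
  qed (use f'_meas g_int in auto)
  then show "((\<lambda>u. ((\<integral>y. f y u \<partial>M) - (\<integral>y. f y x \<partial>M)) / (u - x)) \<circ> X) \<longlonglongrightarrow> (\<integral>y. f' y \<partial>M)"
    unfolding quotient .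
qed

section \<open>The Gaussian kernel\<close>

lemma normal_density_has_real_derivative:
  assumes "0 < \<sigma>"
  shows "(normal_density \<mu> \<sigma> has_real_derivative normal_density \<mu> \<sigma> x * ((\<mu> - x) / \<sigma>\<^sup>2)) (at x)"
proof -
  have "((\<lambda>x. - (x - \<mu>)\<^sup>2 / (2 * \<sigma>\<^sup>2)) has_real_derivative (\<mu> - x) / \<sigma>\<^sup>2) (at x)"
    using assms by (auto intro!: derivative_eq_intros simp: power2_eq_square field_simps)
  from DERIV_cmult[OF DERIV_fun_exp[OF this], of "1 / sqrt (2 * pi * \<sigma>\<^sup>2)"]
  show ?thesis
    unfolding normal_density_def[abs_def] by (simp add: mult.assoc)
qed

lemma normal_density_le: "normal_density \<mu> \<sigma> x \<le> 1 / sqrt (2 * pi * \<sigma>\<^sup>2)"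
  unfolding normal_density_def by (intro mult_left_le) auto

lemma normal_density_mono_dist:
  assumes "\<bar>x - \<mu>\<bar> \<le> \<bar>x - \<mu>'\<bar>"
  shows "normal_density \<mu>' \<sigma> x \<le> normal_density \<mu> \<sigma> x"
proof -
  have "(x - \<mu>)\<^sup>2 \<le> (x - \<mu>')\<^sup>2"
    using assms by (simp add: abs_le_square_iff)
  then show ?thesis
    unfolding normal_density_def by (auto intro!: mult_left_mono divide_right_mono)
qed

lemma normal_density_reflect:
  "normal_density (- \<mu>) \<sigma> x = exp (- 2 * \<mu> * x / \<sigma>\<^sup>2) * normal_density \<mu> \<sigma> x"
proof -
  have "exp (- (x - - \<mu>)\<^sup>2 / (2 * \<sigma>\<^sup>2)) = exp (- 2 * \<mu> * x / \<sigma>\<^sup>2) * exp (- (x - \<mu>)\<^sup>2 / (2 * \<sigma>\<^sup>2))"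
    unfolding exp_add[symmetric] by (cases "\<sigma> = 0") (simp_all add: field_simps power2_eq_square)
  then show ?thesis
    unfolding normal_density_def by simp
qed

lemma normal_density_deriv_abs_le:
  assumes "0 < \<sigma>"
  shows "\<bar>normal_density \<mu> \<sigma> x * ((\<mu> - x) / \<sigma>\<^sup>2)\<bar> \<le> 1 / sqrt (2 * pi * \<sigma>\<^sup>2) / \<sigma>"
proof -
  define u where "u = \<bar>\<mu> - x\<bar> / \<sigma>"
  have "u \<le> 1 + u\<^sup>2 / 2"
    using sum_power2_ge_zero[of "u - 1" 0] by (simp add: power2_diff)
  also have "\<dots> \<le> exp (u\<^sup>2 / 2)"
    by (rule exp_ge_add_one_self)
  finally have bump: "u * exp (- (u\<^sup>2 / 2)) \<le> 1"
    by (simp add: exp_minus field_simps)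
  have density: "normal_density \<mu> \<sigma> x = 1 / sqrt (2 * pi * \<sigma>\<^sup>2) * exp (- (u\<^sup>2 / 2))"
    unfolding normal_density_def u_def by (simp add: power_divide power2_commute)
  have factor: "\<bar>(\<mu> - x) / \<sigma>\<^sup>2\<bar> = u / \<sigma>"
    using assms unfolding u_def by (simp add: power2_eq_square)
  have "\<bar>normal_density \<mu> \<sigma> x * ((\<mu> - x) / \<sigma>\<^sup>2)\<bar> = normal_density \<mu> \<sigma> x * \<bar>(\<mu> - x) / \<sigma>\<^sup>2\<bar>"
    by (simp add: abs_mult)
  also have "\<dots> = 1 / sqrt (2 * pi * \<sigma>\<^sup>2) / \<sigma> * (u * exp (- (u\<^sup>2 / 2)))"
    unfolding density factor by simp
  also have "\<dots> \<le> 1 / sqrt (2 * pi * \<sigma>\<^sup>2) / \<sigma> * 1"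
    using assms bump by (intro mult_left_mono) auto
  finally show ?thesis
    by simp
qed

section \<open>Noised densities and their scores\<close>

lemma sched_a_pos: "0 < sched_a T t"
  by (simp add: sched_a_def)

lemma sched_a_less_one: "t < T \<Longrightarrow> sched_a T t < 1"
  by (simp add: sched_a_def)

lemma sched_b_squared: "t < T \<Longrightarrow> (sched_b T t)\<^sup>2 = 1 - (sched_a T t)\<^sup>2"
  using sched_a_pos[of T t] sched_a_less_one[of t T]
  by (simp add: sched_b_def power_le_one)

lemma sched_b_pos: "t < T \<Longrightarrow> 0 < sched_b T t"
  using sched_a_pos[of T t] sched_a_less_one[of t T]
  by (simp add: sched_b_def power_less_one_iff abs_square_less_1)

definition noised_density_deriv :: "real \<Rightarrow> (real \<Rightarrow> real) \<Rightarrow> real \<Rightarrow> real \<Rightarrow> real" where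
  "noised_density_deriv T q t x = (LINT y|lborel.
     q y * normal_density (sched_a T t * y) (sched_b T t) x * ((sched_a T t * y - x) / (sched_b T t)\<^sup>2))"

lemma integrable_noised_density:
  assumes "is_pdf q"
  shows "integrable lborel (\<lambda>y. q y * normal_density (sched_a T t * y) (sched_b T t) x)"
proof (rule integrable_mult_bounded)
  show "\<bar>normal_density (sched_a T t * y) (sched_b T t) x\<bar> \<le> 1 / sqrt (2 * pi * (sched_b T t)\<^sup>2)" for y
    using normal_density_le by simp
qed (use assms in \<open>auto simp: is_pdf_def normal_density_def\<close>)

lemma integrable_noised_density_deriv:
  assumes "is_pdf q" and "t < T"
  shows "integrable lborel (\<lambda>y. q y * normal_density (sched_a T t * y) (sched_b T t) x
           * ((sched_a T t * y - x) / (sched_b T t)\<^sup>2))"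
proof -
  have "integrable lborel (\<lambda>y. q y * (normal_density (sched_a T t * y) (sched_b T t) x
           * ((sched_a T t * y - x) / (sched_b T t)\<^sup>2)))"
  proof (rule integrable_mult_bounded)
    show "(\<lambda>y. normal_density (sched_a T t * y) (sched_b T t) x * ((sched_a T t * y - x) / (sched_b T t)\<^sup>2))
        \<in> borel_measurable lborel"
      unfolding normal_density_def by measurable
  qed (use assms normal_density_deriv_abs_le[OF sched_b_pos[OF assms(2)]] in \<open>auto simp: is_pdf_def\<close>)
  then show ?thesis
    by (simp add: mult.assoc)
qed

lemma has_real_derivative_noised_density:
  assumes "is_pdf q" and "t < T"
  shows "(noised_density T q t has_real_derivative noised_density_deriv T q t x) (at x)"
proof -
  define a b where "a = sched_a T t" and "b = sched_b T t"
  define B where "B = 1 / sqrt (2 * pi * b\<^sup>2) / b"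
  have b: "0 < b"
    using sched_b_pos[OF assms(2)] by (simp add: b_def)
  have q: "\<And>y. 0 \<le> q y" "integrable lborel q"
    using assms(1) by (auto simp: is_pdf_def)
  have "\<bar>normal_density (a * y) b u - normal_density (a * y) b x\<bar> \<le> B * \<bar>u - x\<bar>" for y u
    unfolding B_def using field_differentiable_bound[OF convex_UNIV _ _ UNIV_I UNIV_I]
      normal_density_has_real_derivative[OF b] normal_density_deriv_abs_le[OF b] by fastforce
  then have "\<bar>q y * normal_density (a * y) b u - q y * normal_density (a * y) b x\<bar> \<le> q y * B * \<bar>u - x\<bar>" for y u
    using q(1)[of y] by (simp add: abs_mult right_diff_distrib[symmetric] mult.assoc mult_left_mono)
  then show ?thesis
    unfolding noised_density_def[abs_def] noised_density_deriv_def a_def[symmetric] b_def[symmetric]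
  proof (intro has_real_derivative_integral_dominated)
    show "integrable lborel (\<lambda>y. q y * B)"
      using q(2) by simp
    show "(\<lambda>y. q y * normal_density (a * y) b x * ((a * y - x) / b\<^sup>2)) \<in> borel_measurable lborel"
      using assms(1) by (auto simp: is_pdf_def normal_density_def)
    show "((\<lambda>u. q y * normal_density (a * y) b u) has_real_derivative
        q y * normal_density (a * y) b x * ((a * y - x) / b\<^sup>2)) (at x)" for y
      using DERIV_cmult[OF normal_density_has_real_derivative[OF b]] by (simp add: mult.assoc)
  qed (use integrable_noised_density[OF assms(1)] in \<open>auto simp: a_def b_def\<close>)
qed

lemma score_eq_deriv_divide:
  assumes "(f has_real_derivative d) (at x)" and "0 < f x"
  shows "score f x = d / f x"
proof -
  have "((\<lambda>y. ln (f y)) has_real_derivative 1 / f x * d) (at x)"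
    by (rule DERIV_chain2[OF DERIV_ln_divide[OF assms(2)] assms(1)])
  then show ?thesis
    unfolding score_def by (simp add: DERIV_imp_deriv)
qed

text \<open>The score of a noised density is a posterior average of \<open>(a y - x) / b\<^sup>2\<close>, hence is
  bounded by the extreme points of the support of \<open>q\<close>.\<close>

lemma noised_density_deriv_le:
  assumes "is_pdf q" and "t < T" and "\<forall>y. q y \<noteq> 0 \<longrightarrow> y \<le> M"
  shows "noised_density_deriv T q t x \<le> (sched_a T t * M - x) / (sched_b T t)\<^sup>2 * noised_density T q t x"
  unfolding noised_density_deriv_def noised_density_def
proof (rule integral_weighted_le)
  fix y
  assume "q y * normal_density (sched_a T t * y) (sched_b T t) x \<noteq> 0"
  then have "sched_a T t * y \<le> sched_a T t * M"
    using assms(3) sched_a_pos by (simp add: mult_left_mono)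
  then show "(sched_a T t * y - x) / (sched_b T t)\<^sup>2 \<le> (sched_a T t * M - x) / (sched_b T t)\<^sup>2"
    by (simp add: divide_right_mono)
qed (use assms integrable_noised_density integrable_noised_density_deriv in \<open>auto simp: is_pdf_def\<close>)

lemma noised_density_deriv_ge:
  assumes "is_pdf q" and "t < T" and "\<forall>y. q y \<noteq> 0 \<longrightarrow> m \<le> y"
  shows "(sched_a T t * m - x) / (sched_b T t)\<^sup>2 * noised_density T q t x \<le> noised_density_deriv T q t x"
  unfolding noised_density_deriv_def noised_density_def
proof (rule integral_weighted_ge)
  fix y
  assume "q y * normal_density (sched_a T t * y) (sched_b T t) x \<noteq> 0"
  then have "sched_a T t * m \<le> sched_a T t * y"
    using assms(3) sched_a_pos by (simp add: mult_left_mono)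
  then show "(sched_a T t * m - x) / (sched_b T t)\<^sup>2 \<le> (sched_a T t * y - x) / (sched_b T t)\<^sup>2"
    by (simp add: divide_right_mono)
qed (use assms integrable_noised_density integrable_noised_density_deriv in \<open>auto simp: is_pdf_def\<close>)

lemma noised_density_ge:
  assumes "is_pdf q" and "\<forall>y. q y \<noteq> 0 \<longrightarrow> k \<le> normal_density (sched_a T t * y) (sched_b T t) x"
  shows "k \<le> noised_density T q t x"
  using integral_weighted_ge[of lborel q, OF _ integrable_noised_density[OF assms(1)]] assms
  unfolding noised_density_def by (auto simp: is_pdf_def)

lemma noised_density_le:
  assumes "is_pdf q" and "\<forall>y. q y \<noteq> 0 \<longrightarrow> normal_density (sched_a T t * y) (sched_b T t) x \<le> k"
  shows "noised_density T q t x \<le> k"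
  using integral_weighted_le[of lborel q, OF _ integrable_noised_density[OF assms(1)]] assms
  unfolding noised_density_def by (auto simp: is_pdf_def)

section \<open>The guided field\<close>

text \<open>With \<open>n1, nm\<close> the two noised densities at \<open>x\<close> and \<open>d1, dm\<close> their derivatives, the left-hand
  side below is the score part of the guided field (see \<open>guided_field_eq\<close>).\<close>

lemma guided_combination_le:
  fixes n1 nm d1 dm w A B E :: real
  assumes "0 < n1" and "0 \<le> nm" and "0 \<le> w"
    and "d1 \<le> A * n1" and "- B * nm \<le> dm" and "nm \<le> E * n1" and "0 \<le> A + B"
  shows "(w + 1) * (d1 / n1) - w * ((1/2 * d1 + 1/2 * dm) / (1/2 * n1 + 1/2 * nm)) \<le> A + w * (A + B) * E"
proof -
  have "0 < n1 + nm"
    using assms(1,2) by simp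
  then have score_gap: "d1 / n1 - (1/2 * d1 + 1/2 * dm) / (1/2 * n1 + 1/2 * nm) = (d1 * nm - dm * n1) / n1 / (n1 + nm)"
    using assms(1) by (simp add: field_split_simps)
  have "(w + 1) * (d1 / n1) - w * ((1/2 * d1 + 1/2 * dm) / (1/2 * n1 + 1/2 * nm))
      = d1 / n1 + w * (d1 / n1 - (1/2 * d1 + 1/2 * dm) / (1/2 * n1 + 1/2 * nm))"
    by (simp only: algebra_simps)
  also have "\<dots> = d1 / n1 + w * ((d1 * nm - dm * n1) / n1 / (n1 + nm))"
    unfolding score_gap ..
  also have "\<dots> \<le> A + w * ((A + B) * E)"
  proof (intro add_mono mult_left_mono)
    show "d1 / n1 \<le> A"
      using assms(1,4) by (simp add: divide_le_eq)
    have "d1 * nm - dm * n1 \<le> (A + B) * nm * n1"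
      using assms(1,2,4,5) mult_right_mono[OF assms(4) assms(2)] mult_right_mono[OF assms(5) less_imp_le[OF assms(1)]]
      by (simp add: algebra_simps)
    then have "(d1 * nm - dm * n1) / n1 \<le> (A + B) * nm"
      using assms(1) by (simp add: divide_le_eq)
    also have "\<dots> \<le> (A + B) * (E * (n1 + nm))"
    proof (intro mult_left_mono)
      have "0 \<le> E"
        using order_trans[OF assms(2) assms(6)] assms(1) by (simp add: zero_le_mult_iff)
      then show "nm \<le> E * (n1 + nm)"
        using assms(2,6) by (simp add: algebra_simps add_increasing2)
    qed (use assms in auto)
    finally show "(d1 * nm - dm * n1) / n1 / (n1 + nm) \<le> (A + B) * E"
      using assms(1,2) by (simp add: divide_le_eq mult_ac)
  qed (use assms in auto)
  finally show ?thesis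
    by (simp add: mult.assoc)
qed

text \<open>Both noised densities are compared with the Gaussian kernel centred at \<open>\<plusminus>a \<alpha>1\<close>, the points of
  the two supports nearest to \<open>x\<close>; the ratio of these two kernels is the exponential factor.\<close>

lemma noised_density_reflected_le:
  fixes \<alpha>1 \<alpha>2 :: real
  assumes "0 < \<alpha>1" and "\<alpha>1 < \<alpha>2" and p1: "is_pdf p1" and pm1: "is_pdf pm1"
    and supp1: "\<forall>y. y \<notin> {\<alpha>1..\<alpha>2} \<longrightarrow> p1 y = 0"
    and suppm1: "\<forall>y. y \<notin> {-\<alpha>2..-\<alpha>1} \<longrightarrow> pm1 y = 0"
    and "t < T" and "(\<alpha>1 + \<alpha>2) / 2 \<le> x"
  shows "0 < noised_density T p1 t x"
    and "noised_density T pm1 t x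
           \<le> exp (- 2 * sched_a T t * \<alpha>1 * x / (sched_b T t)\<^sup>2) * noised_density T p1 t x"
proof -
  define a b where "a = sched_a T t" and "b = sched_b T t"
  have a: "0 < a" "a < 1" and b: "0 < b"
    using sched_a_pos sched_a_less_one sched_b_pos \<open>t < T\<close> by (auto simp: a_def b_def)
  have "\<bar>x - a * y\<bar> \<le> \<bar>x - a * \<alpha>1\<bar>" if "p1 y \<noteq> 0" for y
  proof -
    have "a * \<alpha>1 \<le> a * y" "a * y \<le> a * \<alpha>2"
      using that supp1 a by auto
    moreover have "a * (\<alpha>1 + \<alpha>2) \<le> 2 * x"
      using a assms(1,2,8) by (simp add: mult_left_le_one_le order_trans[of _ "\<alpha>1 + \<alpha>2"])
    ultimately show ?thesis
      by (simp add: algebra_simps abs_le_iff)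
  qed
  then have n1: "normal_density (a * \<alpha>1) b x \<le> noised_density T p1 t x"
    unfolding a_def b_def by (intro noised_density_ge[OF p1] allI impI normal_density_mono_dist)
  then show "0 < noised_density T p1 t x"
    using normal_density_pos[OF b, of "a * \<alpha>1" x] by linarith
  have "\<bar>x - - (a * \<alpha>1)\<bar> \<le> \<bar>x - a * y\<bar>" if "pm1 y \<noteq> 0" for y
  proof -
    have "y \<le> - \<alpha>1"
      using that suppm1 by auto
    then have "a * y \<le> - (a * \<alpha>1)"
      using a mult_left_mono[of y "- \<alpha>1" a] by simp
    then show ?thesis
      using assms(1,2,8) a by auto
  qed
  then have "noised_density T pm1 t x \<le> normal_density (- (a * \<alpha>1)) b x"
    unfolding a_def b_def by (intro noised_density_le[OF pm1] allI impI normal_density_mono_dist)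
  also have "\<dots> \<le> exp (- 2 * a * \<alpha>1 * x / b\<^sup>2) * noised_density T p1 t x"
    unfolding normal_density_reflect using n1 by (simp add: mult_left_mono algebra_simps)
  finally show "noised_density T pm1 t x
      \<le> exp (- 2 * sched_a T t * \<alpha>1 * x / (sched_b T t)\<^sup>2) * noised_density T p1 t x"
    by (simp add: a_def b_def)
qed

lemma guided_field_eq:
  assumes "is_pdf p1" and "is_pdf pm1" and "t < T" and "0 < noised_density T p1 t x"
  defines "n1 \<equiv> noised_density T p1 t x" and "nm \<equiv> noised_density T pm1 t x"
    and "d1 \<equiv> noised_density_deriv T p1 t x" and "dm \<equiv> noised_density_deriv T pm1 t x"
  shows "guided_field T p1 pm1 w t x = x + (w + 1) * (d1 / n1) - w * ((1/2 * d1 + 1/2 * dm) / (1/2 * n1 + 1/2 * nm))"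
proof -
  have "0 \<le> nm"
    using noised_density_ge[OF assms(2), of 0] by (simp add: nm_def)
  have mix: "mix_density T p1 pm1 t = (\<lambda>z. 1/2 * noised_density T p1 t z + 1/2 * noised_density T pm1 t z)"
    unfolding mix_density_def[abs_def] ..
  have "((\<lambda>z. 1/2 * noised_density T p1 t z + 1/2 * noised_density T pm1 t z)
      has_real_derivative 1/2 * d1 + 1/2 * dm) (at x)"
    unfolding d1_def dm_def by (intro DERIV_add DERIV_cmult has_real_derivative_noised_density assms(1-3))
  then have "score (mix_density T p1 pm1 t) x = (1/2 * d1 + 1/2 * dm) / (1/2 * n1 + 1/2 * nm)"
    unfolding mix using assms(4) \<open>0 \<le> nm\<close> unfolding n1_def nm_def by (intro score_eq_deriv_divide) auto
  moreover have "score (noised_density T p1 t) x = d1 / n1"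
    using assms(4) unfolding d1_def n1_def by (intro score_eq_deriv_divide has_real_derivative_noised_density assms(1,3))
  ultimately show ?thesis
    unfolding guided_field_def by simp
qed

lemma guided_field_le:
  fixes \<alpha>1 \<alpha>2 :: real
  assumes "0 < \<alpha>1" and "\<alpha>1 < \<alpha>2" and p1: "is_pdf p1" and pm1: "is_pdf pm1"
    and supp1: "\<forall>y. y \<notin> {\<alpha>1..\<alpha>2} \<longrightarrow> p1 y = 0"
    and suppm1: "\<forall>y. y \<notin> {-\<alpha>2..-\<alpha>1} \<longrightarrow> pm1 y = 0"
    and "t < T" and "0 \<le> w" and "(\<alpha>1 + \<alpha>2) / 2 \<le> x"
  shows "guided_field T p1 pm1 w t x \<le> x + (sched_a T t * \<alpha>2 - x) / (sched_b T t)\<^sup>2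
           + w * (2 * sched_a T t * \<alpha>2 / (sched_b T t)\<^sup>2) * exp (- 2 * sched_a T t * \<alpha>1 * x / (sched_b T t)\<^sup>2)"
proof -
  define a b where "a = sched_a T t" and "b = sched_b T t"
  note n = noised_density_reflected_le[OF assms(1-7,9)]
  have "0 \<le> noised_density T pm1 t x"
    using noised_density_ge[OF pm1, of 0] by simp
  moreover have "noised_density_deriv T p1 t x \<le> (a * \<alpha>2 - x) / b\<^sup>2 * noised_density T p1 t x"
    using noised_density_deriv_le[OF p1 \<open>t < T\<close>, of \<alpha>2] supp1 by (auto simp: a_def b_def)
  moreover have "- ((a * \<alpha>2 + x) / b\<^sup>2) * noised_density T pm1 t x \<le> noised_density_deriv T pm1 t x"
    using noised_density_deriv_ge[OF pm1 \<open>t < T\<close>, of "- \<alpha>2"] suppm1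
    by (auto simp: a_def b_def minus_divide_left)
  moreover have "0 \<le> (a * \<alpha>2 - x) / b\<^sup>2 + (a * \<alpha>2 + x) / b\<^sup>2"
    using assms(1,2) sched_a_pos[of T t] by (simp add: a_def add_divide_distrib[symmetric])
  ultimately have "guided_field T p1 pm1 w t x
      \<le> x + ((a * \<alpha>2 - x) / b\<^sup>2 + w * ((a * \<alpha>2 - x) / b\<^sup>2 + (a * \<alpha>2 + x) / b\<^sup>2) * exp (- 2 * a * \<alpha>1 * x / b\<^sup>2))"
    unfolding guided_field_eq[OF p1 pm1 \<open>t < T\<close> n(1)] a_def b_def
    using guided_combination_le[OF n(1) _ \<open>0 \<le> w\<close> _ _ n(2)] by simp
  also have "(a * \<alpha>2 - x) / b\<^sup>2 + (a * \<alpha>2 + x) / b\<^sup>2 = 2 * a * \<alpha>2 / b\<^sup>2"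
    by (simp add: add_divide_distrib[symmetric])
  finally show ?thesis
    unfolding a_def b_def by (simp only: add.assoc)
qed

section \<open>Rescaled time\<close>

lemma continuous_on_Icc_of_derivative:
  fixes x x' :: "real \<Rightarrow> real"
  assumes "a < b"
    and deriv: "\<forall>t\<in>{a..<b}. (x has_real_derivative x' t) (at t within {a..<b})"
    and endpoint: "(x \<longlongrightarrow> x b) (at_left b)"
  shows "continuous_on {a..b} x"
proof (rule continuous_on_IccI[OF _ endpoint _ \<open>a < b\<close>])
  have cont: "continuous_on {a..<b} x"
    using deriv by (intro DERIV_continuous_on) auto
  then have "(x \<longlongrightarrow> x a) (at a within {a..<b})"
    using \<open>a < b\<close> by (simp add: continuous_on_def)
  then have "(x \<longlongrightarrow> x a) (at a within {a..(a + b) / 2})"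
    by (rule tendsto_within_subset) (use \<open>a < b\<close> in auto)
  then show "(x \<longlongrightarrow> x a) (at_right a)"
    using \<open>a < b\<close> by (simp add: at_within_Icc_at_right)
  show "x \<midarrow>t\<rightarrow> x t" if "a < t" "t < b" for t
    using continuous_on_interior[OF cont] that by (simp add: isCont_def)
qed

lemma continuous_on_rescaled_time:
  fixes x :: "real \<Rightarrow> real"
  assumes "continuous_on {0..T} x"
  shows "continuous_on {exp (- T)..1} (\<lambda>s. x (T + ln s))"
proof (rule continuous_on_compose2[OF assms])
  have pos: "0 < s" if "s \<in> {exp (- T)..1}" for s
    using that exp_gt_zero[of "- T"] by (simp del: exp_gt_zero)
  then show "continuous_on {exp (- T)..1} (\<lambda>s. T + ln s)"
    by (intro continuous_intros) auto
  have "T + ln s \<in> {0..T}" if "s \<in> {exp (- T)..1}" for s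
  proof -
    have "ln (exp (- T)) \<le> ln s"
      using that pos[OF that] by (subst ln_le_cancel_iff) auto
    then show ?thesis
      using that pos[OF that] by simp
  qed
  then show "(\<lambda>s. T + ln s) ` {exp (- T)..1} \<subseteq> {0..T}"
    by blast
qed

lemma has_real_derivative_rescaled_time:
  fixes x x' :: "real \<Rightarrow> real"
  assumes deriv: "\<forall>t\<in>{0..<T}. (x has_real_derivative x' t) (at t within {0..<T})"
    and "exp (- T) < s" and "s < 1"
  shows "((\<lambda>s. x (T + ln s)) has_real_derivative x' (T + ln s) * (1 / s)) (at s)"
proof (rule DERIV_chain2[where f=x])
  have s: "0 < s"
    using assms(2) by (rule order_less_trans[OF exp_gt_zero])
  have "- T < ln s"
    using assms(2) ln_less_cancel_iff[OF exp_gt_zero s] by simp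
  then have t: "T + ln s \<in> {0<..<T}"
    using assms(3) s by simp
  then have "(x has_real_derivative x' (T + ln s)) (at (T + ln s) within {0..<T})"
    using deriv by simp
  then have "(x has_real_derivative x' (T + ln s)) (at (T + ln s) within {0<..<T})"
    by (rule has_field_derivative_subset) auto
  moreover have "at (T + ln s) within {0<..<T} = at (T + ln s)"
    using t by (intro at_within_open) auto
  ultimately show "(x has_real_derivative x' (T + ln s)) (at (T + ln s))"
    by simp
  show "((\<lambda>s. T + ln s) has_real_derivative 1 / s) (at s)"
    using s by (auto intro!: derivative_eq_intros)
qed

section \<open>A differential inequality\<close>

lemma differential_inequality_stays_below:
  fixes X X' :: "real \<Rightarrow> real"
  assumes cont: "continuous_on {s0..1} X"
    and deriv: "\<And>s. s0 < s \<Longrightarrow> s < 1 \<Longrightarrow> (X has_real_derivative X' s) (at s)"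
    and bound: "\<And>s. s0 < s \<Longrightarrow> s < 1 \<Longrightarrow> V \<le> X s \<Longrightarrow> X' s * (1 - s\<^sup>2) \<le> s * (V - X s) - c"
    and "0 < c" and "0 \<le> s0" and "s0 \<le> \<sigma>" and "X \<sigma> \<le> V" and "\<sigma> \<le> s" and "s \<le> 1"
  shows "X s \<le> V"
proof (rule ccontr)
  assume "\<not> X s \<le> V"
  define S where "S = {r \<in> {\<sigma>..s}. X r \<le> V}"
  have "closed S"
    unfolding S_def using assms
    by (intro continuous_on_closed_Collect_le continuous_on_subset[OF cont] continuous_on_const) auto
  moreover have "\<sigma> \<in> S" and S_le: "\<And>r. r \<in> S \<Longrightarrow> r \<le> s"
    using assms unfolding S_def by auto
  moreover have bdd: "bdd_above S"
    by (rule bdd_aboveI[OF S_le])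
  ultimately have "Sup S \<in> S"
    by (intro closed_contains_Sup) auto
  then have m: "\<sigma> \<le> Sup S" "Sup S \<le> s" "X (Sup S) \<le> V"
    unfolding S_def by auto
  have above: "V < X r" if "Sup S < r" "r \<le> s" for r
    using that m cSup_upper[OF _ bdd, of r] unfolding S_def by force
  \<comment> \<open>on \<open>(Sup S, s]\<close> the solution stays above \<open>V\<close>, where the bound forces \<open>X' < 0\<close>\<close>
  have "X s \<le> X (Sup S)"
  proof (rule DERIV_nonpos_imp_decreasing_open[OF m(2)])
    fix z
    assume z: "Sup S < z" "z < s"
    then have z01: "s0 < z" "z < 1" "0 < 1 - z\<^sup>2"
      using assms m by (auto simp: power_less_one_iff abs_square_less_1)
    have "X' z * (1 - z\<^sup>2) \<le> z * (V - X z) - c"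
      using bound z01 above[of z] z by simp
    also have "\<dots> < 0"
      using mult_nonneg_nonpos[of z "V - X z"] above[of z] z z01 assms by linarith
    finally have "X' z \<le> 0"
      using z01 by (simp add: mult_less_0_iff)
    then show "\<exists>y. (X has_real_derivative y) (at z) \<and> y \<le> 0"
      using deriv z01 by blast
  qed (use assms m in \<open>auto intro: continuous_on_subset[OF cont]\<close>)
  then show False
    using m \<open>\<not> X s \<le> V\<close> by simp
qed

lemma differential_inequality_decay:
  fixes X X' :: "real \<Rightarrow> real"
  assumes cont: "continuous_on {s0..1} X"
    and deriv: "\<And>s. s0 < s \<Longrightarrow> s < 1 \<Longrightarrow> (X has_real_derivative X' s) (at s)"
    and bound: "\<And>s. s0 < s \<Longrightarrow> s < 1 \<Longrightarrow> V \<le> X s \<Longrightarrow> X' s * (1 - s\<^sup>2) \<le> s * (V - X s) - c"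
    and "0 \<le> s0" and "s0 \<le> u" and "u \<le> v" and "v < 1" and above: "\<forall>s\<in>{u..v}. V \<le> X s"
  shows "(X v - V + c * v) / sqrt (1 - v\<^sup>2) \<le> (X u - V + c * u) / sqrt (1 - u\<^sup>2)"
proof (rule DERIV_nonpos_imp_decreasing_open[OF \<open>u \<le> v\<close>])
  have pos: "0 < 1 - s\<^sup>2" if "s \<in> {u..v}" for s
    using that assms by (auto simp: power_less_one_iff abs_square_less_1)
  show "continuous_on {u..v} (\<lambda>s. (X s - V + c * s) / sqrt (1 - s\<^sup>2))"
    using pos assms by (intro continuous_intros continuous_on_subset[OF cont]) force+
  fix z
  assume z: "u < z" "z < v"
  define r where "r = sqrt (1 - z\<^sup>2)"
  have z01: "s0 < z" "z < 1" "0 \<le> z" "0 < 1 - z\<^sup>2"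
    using z pos[of z] assms by auto
  have r: "0 < r" "r * r = 1 - z\<^sup>2"
    using z01 by (auto simp: r_def)
  have "((\<lambda>s. sqrt (1 - s\<^sup>2)) has_real_derivative - z / r) (at z)"
    unfolding r_def using z01 by (auto intro!: derivative_eq_intros simp: field_simps power2_eq_square)
  moreover have "((\<lambda>s. X s - V + c * s) has_real_derivative X' z + c) (at z)"
    using z01 by (auto intro!: derivative_eq_intros deriv)
  ultimately have g_deriv: "((\<lambda>s. (X s - V + c * s) / sqrt (1 - s\<^sup>2)) has_real_derivative
      ((X' z + c) * r - (X z - V + c * z) * (- z / r)) / (r * r)) (at z)"
    using DERIV_divide r unfolding r_def by force
  have "((X' z + c) * r - (X z - V + c * z) * (- z / r)) * r = (X' z + c) * (r * r) + (X z - V + c * z) * z"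
    using r by (simp add: field_simps)
  also have "\<dots> = X' z * (1 - z\<^sup>2) + c + z * (X z - V)"
    unfolding r(2) by (simp add: algebra_simps power2_eq_square)
  finally have "((X' z + c) * r - (X z - V + c * z) * (- z / r)) * r \<le> 0"
    using bound[OF z01(1,2)] above z by (simp add: algebra_simps)
  then have "((X' z + c) * r - (X z - V + c * z) * (- z / r)) / (r * r) \<le> 0"
    using r z01 by (simp add: divide_nonpos_pos mult_le_0_iff)
  with g_deriv show "\<exists>y. ((\<lambda>s. (X s - V + c * s) / sqrt (1 - s\<^sup>2)) has_real_derivative y) (at z) \<and> y \<le> 0"
    by blast
qed

lemma differential_inequality_below_after:
  fixes X X' :: "real \<Rightarrow> real"
  assumes cont: "continuous_on {s0..1} X"
    and deriv: "\<And>s. s0 < s \<Longrightarrow> s < 1 \<Longrightarrow> (X has_real_derivative X' s) (at s)"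
    and bound: "\<And>s. s0 < s \<Longrightarrow> s < 1 \<Longrightarrow> V \<le> X s \<Longrightarrow> X' s * (1 - s\<^sup>2) \<le> s * (V - X s) - c"
    and "0 < c" and "0 \<le> s0" and "s0 \<le> s1" and "s1 < 1"
    and start: "sqrt (1 - s1\<^sup>2) * (X s0 - V + c * s0) \<le> c * s1 * sqrt (1 - s0\<^sup>2)"
    and "s1 \<le> s" and "s \<le> 1"
  shows "X s \<le> V"
proof -
  have "\<exists>\<sigma>\<in>{s0..s1}. X \<sigma> \<le> V"
  proof (rule ccontr)
    assume "\<not> (\<exists>\<sigma>\<in>{s0..s1}. X \<sigma> \<le> V)"
    then have above: "\<forall>s\<in>{s0..s1}. V \<le> X s" and "V < X s1"
      using assms by force+
    have r: "0 < sqrt (1 - s0\<^sup>2)" "0 < sqrt (1 - s1\<^sup>2)"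
      using assms by (auto simp: power_less_one_iff abs_square_less_1)
    have "(X s1 - V + c * s1) / sqrt (1 - s1\<^sup>2) \<le> (X s0 - V + c * s0) / sqrt (1 - s0\<^sup>2)"
      using assms by (intro differential_inequality_decay[OF cont deriv bound _ order_refl _ _ above])
    also have "\<dots> \<le> c * s1 / sqrt (1 - s1\<^sup>2)"
      using start r by (simp add: field_simps)
    finally have "X s1 \<le> V"
      using r by (simp add: divide_right_mono_neg field_simps)
    with \<open>V < X s1\<close> show False
      by simp
  qed
  then show ?thesis
    using assms by (auto intro: differential_inequality_stays_below[OF cont deriv bound])
qed

section \<open>The barrier\<close>

definition barrier :: "real \<Rightarrow> real \<Rightarrow> real \<Rightarrow> real \<Rightarrow> real" where
  "barrier \<alpha>1 \<alpha>2 w s0 = \<alpha>2 * (1 + 4 * (1 - s0) * (1 + \<alpha>2 * w / \<alpha>1\<^sup>2))"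

lemma exp_minus_add_le_inverse_mult:
  fixes u v :: real
  assumes "0 < u" and "0 < v"
  shows "exp (- (u + v)) \<le> 1 / (u * v)"
proof -
  have "u \<le> exp u" "v \<le> exp v"
    using exp_ge_add_one_self[of u] exp_ge_add_one_self[of v] by linarith+
  then have "u * v \<le> exp u * exp v"
    using assms by (intro mult_mono) auto
  have "exp (- (u + v)) = 1 / (exp u * exp v)"
    by (simp add: exp_diff exp_minus field_simps)
  also have "\<dots> \<le> 1 / (u * v)"
    using assms \<open>u * v \<le> exp u * exp v\<close> by (intro divide_left_mono) auto
  finally show ?thesis .
qed

lemma guided_drift_exponent_ge:
  fixes \<alpha>1 \<alpha>2 w s0 s X :: real
  assumes "0 < \<alpha>1" and "\<alpha>1 < \<alpha>2" and "0 < w"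
    and "3/4 \<le> s0" and "s0 \<le> s" and "s < 1" and "barrier \<alpha>1 \<alpha>2 w s0 \<le> X"
  shows "3 * \<alpha>1 * \<alpha>2 / (4 * (1 - s0)) + 3 * \<alpha>2\<^sup>2 * w / \<alpha>1 \<le> 2 * s * \<alpha>1 * X / (1 - s\<^sup>2)"
proof -
  define \<delta> E where "\<delta> = 1 - s0" and "E = \<alpha>2 * w / \<alpha>1\<^sup>2"
  have V: "barrier \<alpha>1 \<alpha>2 w s0 = \<alpha>2 + 4 * \<delta> * \<alpha>2 * (1 + E)"
    unfolding barrier_def \<delta>_def E_def by (simp add: algebra_simps)
  have pos: "0 < \<delta>" "0 < \<alpha>2" "0 < E" "0 < s" "0 < 1 - s\<^sup>2"
    using assms by (auto simp: \<delta>_def E_def power_less_one_iff abs_square_less_1)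
  then have "0 < barrier \<alpha>1 \<alpha>2 w s0"
    unfolding V by (intro add_pos_nonneg) auto
  then have "0 < X"
    using assms(7) by linarith
  have "1 - s\<^sup>2 = (1 - s) * (1 + s)"
    by (simp add: power2_eq_square algebra_simps)
  also have "\<dots> \<le> \<delta> * 2"
    using assms unfolding \<delta>_def by (intro mult_mono) auto
  finally have "2 * s * \<alpha>1 * X / (2 * \<delta>) \<le> 2 * s * \<alpha>1 * X / (1 - s\<^sup>2)"
    using pos assms \<open>0 < X\<close> by (intro divide_left_mono) auto
  then have "s * X * \<alpha>1 / \<delta> \<le> 2 * s * \<alpha>1 * X / (1 - s\<^sup>2)"
    by (simp add: mult_ac)
  moreover have "3/4 * barrier \<alpha>1 \<alpha>2 w s0 * \<alpha>1 / \<delta> \<le> s * X * \<alpha>1 / \<delta>"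
    using assms pos V by (intro divide_right_mono mult_right_mono mult_mono) auto
  moreover have "3 * \<alpha>1 * \<alpha>2 / (4 * \<delta>) + 3 * \<alpha>2\<^sup>2 * w / \<alpha>1 \<le> 3/4 * barrier \<alpha>1 \<alpha>2 w s0 * \<alpha>1 / \<delta>"
    unfolding V E_def using pos assms by (simp add: field_simps power2_eq_square)
  ultimately show ?thesis
    unfolding \<delta>_def[symmetric] by linarith
qed

lemma guided_drift_exp_le:
  fixes \<alpha>1 \<alpha>2 w \<delta> :: real
  assumes "0 < \<alpha>1" and "\<alpha>1 < \<alpha>2" and "0 < w" and "1 \<le> \<alpha>2\<^sup>2 * w" and "0 < \<delta>"
  shows "2 * w * \<alpha>2 * exp (- (3 * \<alpha>1 * \<alpha>2 / (4 * \<delta>) + 3 * \<alpha>2\<^sup>2 * w / \<alpha>1)) \<le> 3 * \<delta> * \<alpha>2\<^sup>2 * w / \<alpha>1\<^sup>2"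
proof -
  define k1 k2 where "k1 = 3 * \<alpha>1 * \<alpha>2 / (4 * \<delta>)" and "k2 = 3 * \<alpha>2\<^sup>2 * w / \<alpha>1"
  have pos: "0 < \<alpha>2" "0 < k1" "0 < k2"
    using assms by (auto simp: k1_def k2_def)
  have "2 * w * \<alpha>2 * exp (- (k1 + k2)) \<le> 2 * w * \<alpha>2 * (1 / (k1 * k2))"
    using exp_minus_add_le_inverse_mult[OF pos(2,3)] pos assms by (intro mult_left_mono) auto
  also have "\<dots> = 8 * \<delta> / (9 * \<alpha>2\<^sup>2)"
    using pos assms unfolding k1_def k2_def by (simp add: field_simps power2_eq_square)
  also have "\<dots> \<le> 3 * \<delta> * \<alpha>2\<^sup>2 * w / \<alpha>1\<^sup>2"
  proof -
    have "\<alpha>1\<^sup>2 \<le> \<alpha>2\<^sup>2"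
      using assms by (auto intro: power_mono)
    moreover have "\<alpha>2\<^sup>2 * 1 \<le> \<alpha>2\<^sup>2 * (\<alpha>2\<^sup>2 * w)"
      using assms(4) by (rule mult_left_mono) simp
    ultimately have "8 * \<alpha>1\<^sup>2 \<le> 27 * (\<alpha>2\<^sup>2 * (\<alpha>2\<^sup>2 * w))"
      using zero_le_power2[of \<alpha>2] by linarith
    then show ?thesis
      using pos assms by (simp add: field_simps power2_eq_square)
  qed
  finally show ?thesis
    unfolding k1_def k2_def .
qed

lemma guided_drift_le_barrier:
  fixes \<alpha>1 \<alpha>2 w s0 s X :: real
  assumes "0 < \<alpha>1" and "\<alpha>1 < \<alpha>2" and "0 < w" and "1 \<le> \<alpha>2\<^sup>2 * w"
    and "3/4 \<le> s0" and "s0 \<le> s" and "s < 1" and "barrier \<alpha>1 \<alpha>2 w s0 \<le> X"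
  shows "\<alpha>2 - s * X + 2 * w * \<alpha>2 * exp (- 2 * s * \<alpha>1 * X / (1 - s\<^sup>2))
    \<le> s * (barrier \<alpha>1 \<alpha>2 w s0 - X) - 2 * (1 - s0) * \<alpha>2"
proof -
  define \<delta> E where "\<delta> = 1 - s0" and "E = \<alpha>2 * w / \<alpha>1\<^sup>2"
  have V: "barrier \<alpha>1 \<alpha>2 w s0 = \<alpha>2 + 4 * \<delta> * \<alpha>2 * (1 + E)"
    unfolding barrier_def \<delta>_def E_def by (simp add: algebra_simps)
  have pos: "0 < \<delta>" "0 < \<alpha>2" "0 < E"
    using assms by (auto simp: \<delta>_def E_def)
  have "2 * w * \<alpha>2 * exp (- 2 * s * \<alpha>1 * X / (1 - s\<^sup>2))
      \<le> 2 * w * \<alpha>2 * exp (- (3 * \<alpha>1 * \<alpha>2 / (4 * \<delta>) + 3 * \<alpha>2\<^sup>2 * w / \<alpha>1))"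
    using guided_drift_exponent_ge[OF assms(1-3,5-8)] pos assms(3) unfolding \<delta>_def by simp
  also have "\<dots> \<le> 3 * \<delta> * \<alpha>2 * E"
    using guided_drift_exp_le[OF assms(1-4) pos(1)] pos by (simp add: E_def power2_eq_square)
  finally have "2 * w * \<alpha>2 * exp (- 2 * s * \<alpha>1 * X / (1 - s\<^sup>2)) \<le> 3 * \<delta> * \<alpha>2 * E" .
  moreover have "3 * (\<delta> * \<alpha>2 * (1 + E)) \<le> 4 * s * (\<delta> * \<alpha>2 * (1 + E))"
    using assms pos by (intro mult_right_mono) auto
  moreover have "(1 - s) * \<alpha>2 \<le> \<delta> * \<alpha>2"
    using assms pos unfolding \<delta>_def by (intro mult_right_mono) auto
  ultimately show ?thesis
    unfolding V \<delta>_def[symmetric] by (simp add: algebra_simps)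
qed

lemma rescaled_guided_field_le:
  fixes \<alpha>1 \<alpha>2 :: real
  assumes "0 < \<alpha>1" and "\<alpha>1 < \<alpha>2" and "is_pdf p1" and "is_pdf pm1"
    and "\<forall>y. y \<notin> {\<alpha>1..\<alpha>2} \<longrightarrow> p1 y = 0"
    and "\<forall>y. y \<notin> {-\<alpha>2..-\<alpha>1} \<longrightarrow> pm1 y = 0"
    and "0 \<le> w" and "exp (- T) < s" and "s < 1" and "(\<alpha>1 + \<alpha>2) / 2 \<le> y"
  shows "guided_field T p1 pm1 w (T + ln s) y * (1 / s) * (1 - s\<^sup>2)
    \<le> \<alpha>2 - s * y + 2 * w * \<alpha>2 * exp (- 2 * s * \<alpha>1 * y / (1 - s\<^sup>2))"
proof -
  define e q where "e = exp (- 2 * s * \<alpha>1 * y / (1 - s\<^sup>2))" and "q = 1 - s\<^sup>2"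
  have s: "0 < s" "0 < q"
    using assms(8,9) exp_gt_zero[of "- T"]
    by (auto simp: q_def power_less_one_iff abs_square_less_1 simp del: exp_gt_zero)
  then have t: "T + ln s < T" "sched_a T (T + ln s) = s"
    using assms(9) by (simp_all add: sched_a_def)
  then have "(sched_b T (T + ln s))\<^sup>2 = q"
    by (simp add: sched_b_squared q_def)
  then have "guided_field T p1 pm1 w (T + ln s) y \<le> y + (s * \<alpha>2 - y) / q + w * (2 * s * \<alpha>2 / q) * e"
    using guided_field_le[OF assms(1-6) t(1) assms(7,10)] t(2) by (simp add: e_def q_def)
  then have "guided_field T p1 pm1 w (T + ln s) y * (q / s)
      \<le> (y + (s * \<alpha>2 - y) / q + w * (2 * s * \<alpha>2 / q) * e) * (q / s)"
    using s by (intro mult_right_mono) auto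
  also have "\<dots> = (y * q + s * \<alpha>2 - y + 2 * w * s * \<alpha>2 * e) / s"
    using s by (simp add: field_simps)
  also have "y * q + s * \<alpha>2 - y + 2 * w * s * \<alpha>2 * e = s * (\<alpha>2 - s * y + 2 * w * \<alpha>2 * e)"
    by (simp add: q_def algebra_simps power2_eq_square)
  also have "s * (\<alpha>2 - s * y + 2 * w * \<alpha>2 * e) / s = \<alpha>2 - s * y + 2 * w * \<alpha>2 * e"
    using s by simp
  finally show ?thesis
    by (simp add: e_def q_def)
qed

lemma rescaled_guided_field_le_barrier:
  fixes \<alpha>1 \<alpha>2 :: real
  assumes "0 < \<alpha>1" and "\<alpha>1 < \<alpha>2" and "is_pdf p1" and "is_pdf pm1"
    and "\<forall>y. y \<notin> {\<alpha>1..\<alpha>2} \<longrightarrow> p1 y = 0"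
    and "\<forall>y. y \<notin> {-\<alpha>2..-\<alpha>1} \<longrightarrow> pm1 y = 0"
    and "1 < w" and "1 \<le> \<alpha>2\<^sup>2 * w" and "3/4 \<le> s0" and "exp (- T) \<le> s0" and "s0 < s" and "s < 1"
    and "barrier \<alpha>1 \<alpha>2 w s0 \<le> y"
  shows "guided_field T p1 pm1 w (T + ln s) y * (1 / s) * (1 - s\<^sup>2)
    \<le> s * (barrier \<alpha>1 \<alpha>2 w s0 - y) - 2 * (1 - s0) * \<alpha>2"
proof -
  have "0 \<le> 4 * (1 - s0) * (1 + \<alpha>2 * w / \<alpha>1\<^sup>2)"
    using assms(1,2,7,11,12) by (intro mult_nonneg_nonneg) auto
  then have "\<alpha>2 \<le> barrier \<alpha>1 \<alpha>2 w s0"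
    using assms(1,2) by (simp add: barrier_def mult_le_cancel_left1)
  then have "(\<alpha>1 + \<alpha>2) / 2 \<le> y"
    using assms(2,13) by (simp add: field_simps)
  then have "guided_field T p1 pm1 w (T + ln s) y * (1 / s) * (1 - s\<^sup>2)
      \<le> \<alpha>2 - s * y + 2 * w * \<alpha>2 * exp (- 2 * s * \<alpha>1 * y / (1 - s\<^sup>2))"
    using assms(7,10,11,12) by (intro rescaled_guided_field_le[OF assms(1-6)]) auto
  also have "\<dots> \<le> s * (barrier \<alpha>1 \<alpha>2 w s0 - y) - 2 * (1 - s0) * \<alpha>2"
    using assms(7,11) by (intro guided_drift_le_barrier[OF assms(1,2) _ assms(8,9) _ assms(12,13)]) auto
  finally show ?thesis .
qed

lemma sqrt_ln_gap_bounds: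
  fixes d w :: real
  assumes "1 < w" and "16 / sqrt (ln w) \<le> d"
  shows "256 \<le> d\<^sup>2 * w" and "16 \<le> d * w"
proof -
  have L: "0 < ln w" "ln w \<le> w"
    using assms(1) ln_le_minus_one[of w] by simp_all
  then have "0 < 16 / sqrt (ln w)"
    by simp
  then have "0 < d"
    using assms(2) by linarith
  then have "(16 / sqrt (ln w))\<^sup>2 \<le> d\<^sup>2"
    using assms by (intro power_mono) simp_all
  moreover have "(16 / sqrt (ln w))\<^sup>2 = 256 / ln w"
    using L assms(1) by (simp add: power_divide)
  ultimately have "256 \<le> d\<^sup>2 * ln w"
    using L by (simp add: divide_le_eq)
  also have "\<dots> \<le> d\<^sup>2 * w"
    using L by (intro mult_left_mono) auto
  finally show "256 \<le> d\<^sup>2 * w" .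
  then have "256 * 1 \<le> (d\<^sup>2 * w) * w"
    using assms(1) by (intro mult_mono) auto
  then have "16\<^sup>2 \<le> (d * w)\<^sup>2"
    by (simp add: power2_eq_square mult_ac)
  then show "16 \<le> d * w"
    by (rule power2_le_imp_le) (use \<open>0 < d\<close> assms(1) in simp)
qed

section \<open>The starting time\<close>

lemma start_time_offset_bounds:
  fixes \<delta> D :: real
  assumes "0 < \<delta>" and "\<delta> \<le> 1/4" and "4 * \<delta> < D"
  shows "0 < 16 * \<delta>^5 / ((1 - 2 * \<delta>)^4 * D^4)" and "16 * \<delta>^5 / ((1 - 2 * \<delta>)^4 * D^4) < \<delta>"
proof -
  have "2 * \<delta> < 1/2 * D"
    using assms(3) by simp
  also have "\<dots> \<le> (1 - 2 * \<delta>) * D"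
    using assms by (intro mult_right_mono) auto
  finally have "(2 * \<delta>)^4 < ((1 - 2 * \<delta>) * D)^4"
    using assms by (intro power_strict_mono) auto
  then have "16 * \<delta>^5 / ((1 - 2 * \<delta>)^4 * D^4) < 16 * \<delta>^5 / (16 * \<delta>^4)"
    using assms by (intro divide_strict_left_mono) (auto simp: power_mult_distrib)
  then show "16 * \<delta>^5 / ((1 - 2 * \<delta>)^4 * D^4) < \<delta>"
    using assms by (simp add: field_simps numeral_eq_Suc)
  show "0 < 16 * \<delta>^5 / ((1 - 2 * \<delta>)^4 * D^4)"
    using assms by simp
qed

lemma start_time_offset_small:
  fixes \<delta> c D :: real
  assumes "0 < \<delta>" and "\<delta> \<le> 1/4" and "0 < D" and "64 * \<delta>\<^sup>2 \<le> c * D"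
  shows "2 * (16 * \<delta>^5 / ((1 - 2 * \<delta>)^4 * D^4)) * (3/2 * D)\<^sup>2 \<le> 9/16 * c\<^sup>2 * \<delta>"
proof -
  define m where "m = 1 - 2 * \<delta>"
  have "(1/2)^4 \<le> m^4"
    using assms unfolding m_def by (intro power_mono) auto
  then have "1/16 \<le> m^4"
    by (simp add: power_divide)
  moreover have "(64 * \<delta>\<^sup>2)\<^sup>2 \<le> (c * D)\<^sup>2"
    using assms by (intro power_mono) auto
  ultimately have "1/16 * (64 * \<delta>\<^sup>2)\<^sup>2 \<le> m^4 * (c * D)\<^sup>2"
    by (intro mult_mono) auto
  then have "256 * \<delta>^4 \<le> m^4 * (c * D)\<^sup>2"
    by (simp add: power_mult_distrib)
  moreover have "0 \<le> \<delta>^4"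
    using assms(1) by simp
  ultimately have "128 * \<delta>^4 \<le> m^4 * (c * D)\<^sup>2"
    by linarith
  then have "72 * \<delta>^5 \<le> 9/16 * c\<^sup>2 * \<delta> * (m^4 * D\<^sup>2)"
    using assms(1) by (simp add: power_mult_distrib field_simps numeral_eq_Suc)
  moreover have "0 < m^4 * D\<^sup>2"
    using assms unfolding m_def by simp
  ultimately show ?thesis
    unfolding m_def[symmetric] using assms(3) by (simp add: field_simps power2_eq_square power4_eq_xxxx)
qed

lemma start_time_inequality:
  fixes s0 c D Y :: real
  assumes "3/4 \<le> s0" and "s0 < 1" and "0 < Y" and "Y \<le> D" and "0 < c" and "2 * c \<le> D"
    and "64 * (1 - s0)\<^sup>2 \<le> c * D" and "4 * (1 - s0) < D"
  defines "s1 \<equiv> 1 - 16 * (1 - s0)^5 / ((1 - 2 * (1 - s0))^4 * D^4)"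
  shows "s0 < s1" and "s1 < 1" and "sqrt (1 - s1\<^sup>2) * (Y + c * s0) \<le> c * s1 * sqrt (1 - s0\<^sup>2)"
proof -
  define \<delta> \<epsilon> where "\<delta> = 1 - s0" and "\<epsilon> = 16 * \<delta>^5 / ((1 - 2 * \<delta>)^4 * D^4)"
  have s1: "s1 = 1 - \<epsilon>"
    unfolding s1_def \<epsilon>_def \<delta>_def ..
  have \<delta>: "0 < \<delta>" "\<delta> \<le> 1/4"
    using assms unfolding \<delta>_def by auto
  note \<epsilon> = start_time_offset_bounds[OF \<delta>, of D, folded \<epsilon>_def]
  then show "s0 < s1" and "s1 < 1"
    using assms(8) unfolding s1 \<delta>_def by auto
  have "1 - s1\<^sup>2 \<le> 2 * \<epsilon>"
    using \<epsilon> assms(8) unfolding s1 \<delta>_def by (simp add: power2_eq_square algebra_simps)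
  moreover have "(Y + c * s0)\<^sup>2 \<le> (3/2 * D)\<^sup>2"
  proof (rule power_mono)
    have "c * s0 \<le> c"
      using assms by (simp add: mult_left_le)
    then show "Y + c * s0 \<le> 3/2 * D"
      using assms by linarith
  qed (use assms in simp)
  ultimately have "(1 - s1\<^sup>2) * (Y + c * s0)\<^sup>2 \<le> 2 * \<epsilon> * (3/2 * D)\<^sup>2"
    using \<epsilon> assms(8) \<delta> by (intro mult_mono) (auto simp: \<delta>_def)
  also have "\<dots> \<le> 9/16 * c\<^sup>2 * \<delta>"
    unfolding \<epsilon>_def using start_time_offset_small[OF \<delta>] assms(7,8) \<delta> unfolding \<delta>_def by simp
  also have "\<dots> \<le> s1\<^sup>2 * c\<^sup>2 * (1 - s0\<^sup>2)"
  proof (intro mult_mono)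
    have "(3/4)\<^sup>2 \<le> s1\<^sup>2"
      using assms(1) \<open>s0 < s1\<close> by (intro power_mono) auto
    then show "9/16 \<le> s1\<^sup>2"
      by (simp add: power2_eq_square)
    show "\<delta> \<le> 1 - s0\<^sup>2"
      using assms unfolding \<delta>_def by (simp add: power2_eq_square algebra_simps mult_left_le)
  qed (use \<delta> in simp_all)
  finally have "(1 - s1\<^sup>2) * (Y + c * s0)\<^sup>2 \<le> s1\<^sup>2 * c\<^sup>2 * (1 - s0\<^sup>2)" .
  moreover have "0 \<le> 1 - s1\<^sup>2" "0 \<le> 1 - s0\<^sup>2" "0 \<le> s1"
    using assms(1,2) \<open>s0 < s1\<close> \<open>s1 < 1\<close> by (auto simp: abs_square_le_1)
  ultimately have "(sqrt (1 - s1\<^sup>2) * (Y + c * s0))\<^sup>2 \<le> (c * s1 * sqrt (1 - s0\<^sup>2))\<^sup>2"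
    by (simp add: power_mult_distrib mult_ac)
  then show "sqrt (1 - s1\<^sup>2) * (Y + c * s0) \<le> c * s1 * sqrt (1 - s0\<^sup>2)"
    by (rule power2_le_imp_le) (use \<open>0 \<le> s1\<close> \<open>0 \<le> 1 - s0\<^sup>2\<close> assms(5) in simp)
qed

lemma barrier_excess_bounds:
  fixes \<alpha>1 \<alpha>2 w s0 x0 :: real
  assumes "0 < \<alpha>1" and "\<alpha>1 < \<alpha>2" and "1 < w" and "16 \<le> \<alpha>2 * w" and "s0 < 1"
    and "barrier \<alpha>1 \<alpha>2 w s0 < x0"
  shows "x0 - barrier \<alpha>1 \<alpha>2 w s0 \<le> x0 - \<alpha>2" and "4 * (1 - s0) < x0 - \<alpha>2"
    and "2 * (2 * (1 - s0) * \<alpha>2) \<le> x0 - \<alpha>2" and "64 * (1 - s0) \<le> \<alpha>2 * (x0 - \<alpha>2)"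
proof -
  define \<delta> E where "\<delta> = 1 - s0" and "E = \<alpha>2 * w / \<alpha>1\<^sup>2"
  have V: "barrier \<alpha>1 \<alpha>2 w s0 = \<alpha>2 + 4 * \<delta> * \<alpha>2 * (1 + E)"
    unfolding barrier_def \<delta>_def E_def by (simp add: algebra_simps)
  have pos: "0 < \<delta>" "0 < \<alpha>2" "0 < E"
    using assms by (auto simp: \<delta>_def E_def)
  have terms: "0 < \<alpha>2 * (\<delta> * 4)" "0 < E * (\<alpha>2 * (\<delta> * 4))"
    using pos by simp_all
  have D: "4 * \<delta> * \<alpha>2 * (1 + E) < x0 - \<alpha>2"
    using assms(6) unfolding V by simp
  then show "x0 - barrier \<alpha>1 \<alpha>2 w s0 \<le> x0 - \<alpha>2" and "2 * (2 * (1 - s0) * \<alpha>2) \<le> x0 - \<alpha>2"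
    using terms unfolding V \<delta>_def[symmetric] by (simp_all add: algebra_simps)
  have "w * 1 \<le> w * (\<alpha>2\<^sup>2 / \<alpha>1\<^sup>2)"
    using assms by (intro mult_left_mono) (auto intro: power_mono)
  then have wE: "w \<le> \<alpha>2 * E"
    unfolding E_def by (simp add: power2_eq_square mult_ac)
  have "4 * \<delta> * 1 < 4 * \<delta> * w"
    using assms(3) pos by simp
  also have "\<dots> \<le> 4 * \<delta> * (\<alpha>2 * E)"
    using wE pos by simp
  also have "\<dots> < x0 - \<alpha>2"
    using D terms by (simp add: algebra_simps)
  finally show "4 * (1 - s0) < x0 - \<alpha>2"
    by (simp add: \<delta>_def)
  have "64 * \<delta> \<le> 4 * \<delta> * (\<alpha>2 * w)"
    using assms(4) pos by simp
  also have "\<dots> \<le> 4 * \<delta> * (\<alpha>2 * (\<alpha>2 * E))"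
    using wE pos by (intro mult_left_mono) auto
  also have "\<dots> \<le> \<alpha>2 * (4 * \<delta> * \<alpha>2 * (1 + E))"
    using pos by (simp add: algebra_simps)
  also have "\<dots> \<le> \<alpha>2 * (x0 - \<alpha>2)"
    using D pos by (intro mult_left_mono) auto
  finally show "64 * (1 - s0) \<le> \<alpha>2 * (x0 - \<alpha>2)"
    by (simp add: \<delta>_def)
qed

lemma start_time_exists:
  fixes \<alpha>1 \<alpha>2 w s0 x0 :: real
  assumes "0 < \<alpha>1" and "\<alpha>1 < \<alpha>2" and "1 < w" and "16 \<le> \<alpha>2 * w" and "3/4 \<le> s0" and "s0 < 1"
  obtains s1 where "s0 \<le> s1" and "s1 < 1"
    and "s1 \<le> (if x0 = \<alpha>2 then s0
                else max (1 - 16 * (1 - s0)^5 / ((1 - 2 * (1 - s0))^4 * (x0 - \<alpha>2)^4)) s0)"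
    and "sqrt (1 - s1\<^sup>2) * (x0 - barrier \<alpha>1 \<alpha>2 w s0 + 2 * (1 - s0) * \<alpha>2 * s0)
           \<le> 2 * (1 - s0) * \<alpha>2 * s1 * sqrt (1 - s0\<^sup>2)"
proof (cases "x0 \<le> barrier \<alpha>1 \<alpha>2 w s0")
  case True
  have "0 \<le> sqrt (1 - s0\<^sup>2)"
    using assms(5,6) by (simp add: abs_square_le_1)
  then have "sqrt (1 - s0\<^sup>2) * (x0 - barrier \<alpha>1 \<alpha>2 w s0) \<le> 0"
    using True by (simp add: mult_nonneg_nonpos)
  then show ?thesis
    using that[of s0] assms(6) by (simp add: algebra_simps)
next
  case False
  then have "barrier \<alpha>1 \<alpha>2 w s0 < x0" and Y: "0 < x0 - barrier \<alpha>1 \<alpha>2 w s0"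
    by simp_all
  note excess = barrier_excess_bounds[OF assms(1-4,6) this(1)]
  have "(1 - s0) * (64 * (1 - s0)) \<le> (1 - s0) * (\<alpha>2 * (x0 - \<alpha>2))"
    using excess(4) assms(6) by (intro mult_left_mono) auto
  moreover have "0 \<le> (1 - s0) * (\<alpha>2 * (x0 - \<alpha>2))"
    using excess(4) assms(6) by simp
  ultimately have "(1 - s0) * (64 * (1 - s0)) \<le> 2 * ((1 - s0) * (\<alpha>2 * (x0 - \<alpha>2)))"
    by linarith
  then have D3: "64 * (1 - s0)\<^sup>2 \<le> 2 * (1 - s0) * \<alpha>2 * (x0 - \<alpha>2)"
    by (simp add: power2_eq_square algebra_simps)
  have c: "0 < 2 * (1 - s0) * \<alpha>2"
    using assms(1,2,6) by simp
  note start = start_time_inequality[OF assms(5,6) Y excess(1) c excess(3) D3 excess(2)]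
  have "x0 \<noteq> \<alpha>2"
    using excess(2) assms(6) by auto
  then show ?thesis
    using that[OF _ start(2) _ start(3)] start(1) by simp
qed

theorem lemma3p6:
  fixes \<alpha>1 \<alpha>2 \<beta> T w s0 :: real
    and p1 pm1 :: "real \<Rightarrow> real"
    and x :: "real \<Rightarrow> real"
  assumes "0 < \<alpha>1" and "\<alpha>1 < \<alpha>2" and "1 \<le> \<beta>"
    and "is_pdf p1" and "is_pdf pm1"
    and "\<forall>y. y \<notin> {\<alpha>1..\<alpha>2} \<longrightarrow> p1 y = 0"
    and "\<forall>y. y \<notin> {-\<alpha>2..-\<alpha>1} \<longrightarrow> pm1 y = 0"
    and "\<forall>x1\<in>{-\<alpha>2<..<-\<alpha>1}. \<forall>x2\<in>{\<alpha>1<..<\<alpha>2}.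
           1/\<beta> \<le> pm1 x1 / p1 x2 \<and> pm1 x1 / p1 x2 \<le> \<beta>"
    and "0 < T"
    and "1 < w"
    and "\<alpha>2 - \<alpha>1 \<ge> 16 / sqrt (ln w)"
    and ode: "\<forall>t\<in>{0..<T}. (x has_real_derivative guided_field T p1 pm1 w t (x t)) (at t within {0..<T})"
    and endpoint: "(x \<longlongrightarrow> x T) (at_left T)"
    and "3/4 \<le> s0" and "s0 < 1" and "exp (-T) \<le> s0"
    and "\<forall>s\<in>{s0..1}. x (T + ln s) \<ge> (\<alpha>1 + \<alpha>2) / 2"
  shows "\<forall>s\<in>{(if x (T + ln s0) = \<alpha>2 then s0
               else max (1 - 16 * (1 - s0)^5 /
                          ((1 - 2 * (1 - s0))^4 * (x (T + ln s0) - \<alpha>2)^4)) s0)..1}.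
           x (T + ln s) \<le> \<alpha>2 * (1 + 4 * (1 - s0) * (1 + \<alpha>2 * w / \<alpha>1\<^sup>2))"
proof -
  define X X' where "X s = x (T + ln s)" and "X' s = guided_field T p1 pm1 w (T + ln s) (X s) * (1 / s)" for s
  define V c where "V = barrier \<alpha>1 \<alpha>2 w s0" and "c = 2 * (1 - s0) * \<alpha>2"
  have "16 / sqrt (ln w) \<le> \<alpha>2"
    using assms(1,11) by linarith
  note gap = sqrt_ln_gap_bounds[OF assms(10) this]
  have "continuous_on {exp (- T)..1} X"
    unfolding X_def[abs_def]
    by (rule continuous_on_rescaled_time[OF continuous_on_Icc_of_derivative[OF assms(9) ode endpoint]])
  then have cont: "continuous_on {s0..1} X"
    by (rule continuous_on_subset) (use assms(16) in auto)
  have deriv: "(X has_real_derivative X' s) (at s)" if "s0 < s" "s < 1" for s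
    using has_real_derivative_rescaled_time[OF ode, of s] that assms(16) by (simp add: X_def[abs_def] X'_def)
  have bound: "X' s * (1 - s\<^sup>2) \<le> s * (V - X s) - c" if "s0 < s" "s < 1" "V \<le> X s" for s
    using rescaled_guided_field_le_barrier[OF assms(1,2,4-7,10) _ assms(14,16) that(1,2) that(3)[unfolded V_def]] gap(1)
    by (simp add: X'_def V_def c_def)
  obtain s1 where s1: "s0 \<le> s1" "s1 < 1"
    and lower: "s1 \<le> (if X s0 = \<alpha>2 then s0
                       else max (1 - 16 * (1 - s0)^5 / ((1 - 2 * (1 - s0))^4 * (X s0 - \<alpha>2)^4)) s0)"
    and start: "sqrt (1 - s1\<^sup>2) * (X s0 - V + c * s0) \<le> c * s1 * sqrt (1 - s0\<^sup>2)"
    using start_time_exists[OF assms(1,2,10) gap(2) assms(14,15)] by (auto simp: V_def c_def)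
  have "0 < c" "0 \<le> s0"
    using assms(1,2,14,15) by (auto simp: c_def)
  note below = differential_inequality_below_after[OF cont deriv bound this s1 start]
  show ?thesis
    using below lower unfolding X_def V_def barrier_def by force
qed

end
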